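(* Let $c\in\mathbb{C}\setminus\{0\}$ and let $\mathbf{U}_0(\lambda;x,t)$, $\mu^{[22]}$, $\nu^{[22]}$ be as defined below. Let $\psi_1:\mathbb{R}\to\mathbb{C}$ be such that the integrals defining $$C_\mu(\lambda)=\frac1\pi\Im\Big\{\int_{\mathbb{R}}\psi_1(y)\nu^{[22]}(\lambda;y,0)^*dy\Big\},\qquad C_\nu(\lambda)=-\frac1\pi\Im\Big\{\int_{\mathbb{R}}\psi_1(y)\mu^{[22]}(\lambda;y,0)^*dy\Big\}$$ exist for a.e. $\lambda\in\mathbb{R}$ and $C_\mu,C_\nu\in L^1(\mathbb{R})$. Then $$\psi_1^{\mathbb{R}}(x,t):=\int_{\mathbb{R}}\big(C_\mu(\lambda)\mu^{[22]}(\lambda;x,t)+C_\nu(\lambda)\nu^{[22]}(\lambda;x,t)\big)d\lambda$$ is uniformly bounded for $(x,t)\in\mathbb{R}^2$.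
   Context: $\sigma_2=\begin{bmatrix}0&-\mathrm{i}\\\mathrm{i}&0\end{bmatrix}$, $\sigma_3=\mathrm{diag}(1,-1)$. $\rho(\lambda)$: branch of $\sqrt{\lambda^2+1}$ analytic off $[-\mathrm{i},\mathrm{i}]$ with $\rho\sim\lambda$ (real for real $\lambda\neq0$); $n(\lambda)$ analytic off $[-\mathrm{i},\mathrm{i}]$ with $n^2=(\lambda+\rho)/(2\rho)$, $n\to1$; $\mathbf{E}(\lambda)=n\begin{bmatrix}1&\mathrm{i}(\lambda-\rho)\\\mathrm{i}(\lambda-\rho)&1\end{bmatrix}$. Peregrine data: $\mathbf{s}=(c,-c)^\top$, $N=2|c|^2$, $w(x,t)=-2c^2(x+\mathrm{i}t)$, $\mathbf{Y}(x,t)=\big[4(1-w^* )\mathbf{s}\mathbf{s}^\top\sigma_2+2\mathrm{i}N\sigma_2\mathbf{s}^*\mathbf{s}^\top\sigma_2\big]/(4|1-w|^2+N^2)$, $\mathbf{G}(\lambda;x,t)=\mathbb{I}+\mathbf{Y}/(\lambda-\mathrm{i})+\sigma_2\mathbf{Y}^*\sigma_2/(\lambda+\mathrm{i})$. Then $\psi_0=1+2\mathrm{i}(Y_{12}-Y_{21}^* )$ is the Peregrine breather $1-4\frac{1+2\mathrm{i}(t-t_0)}{1+4(x-x_0)^2+4(t-t_0)^2}$ with $x_0=-\Re c^2/(2|c|^4)$, $t_0=\Im c^2/(2|c|^4)$, and $\mathbf{U}_0(\lambda;x,t):=\mathbf{G}(\lambda;x,t)\mathbf{E}(\lambda)e^{-\mathrm{i}\rho(\lambda)(x+\lambda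 t)\sigma_3}$, $\lambda\in\mathbb{R}\setminus\{0\}$, is a simultaneous fundamental solution of its Lax pair. Let $\mathbf{u}^{[2]}=(u^{[2]}_1,u^{[2]}_2)^\top$ be the second column of $\mathbf{U}_0$, and $\mu^{[22]}(\lambda;x,t)=(u^{[2]}_1)^2-((u^{[2]}_2)^* )^2$, $\nu^{[22]}(\lambda;x,t)=\mathrm{i}(u^{[2]}_1)^2+\mathrm{i}((u^{[2]}_2)^* )^2$; these solve the linearized NLS equation $\mathrm{i}\psi_{1t}+\frac12\psi_{1xx}+(2|\psi_0|^2-1)\psi_1+\psi_0^2\psi_1^*=0$ about $\psi_0$. *)

theory Defs
  imports "HOL-Analysis.Analysis"
begin

text \<open>2x2 complex matrices as complex^2^2; rows/columns indexed by 1 and 2.\<close>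

definition mat2 :: "complex \<Rightarrow> complex \<Rightarrow> complex \<Rightarrow> complex \<Rightarrow> complex^2^2" where
  "mat2 a b c d = (\<chi> i j. if i = 1 then (if j = 1 then a else b) else (if j = 1 then c else d))"

definition vec2 :: "complex \<Rightarrow> complex \<Rightarrow> complex^2" where
  "vec2 a b = (\<chi> i. if i = 1 then a else b)"

definition smat :: "complex \<Rightarrow> complex^2^2 \<Rightarrow> complex^2^2" where
  "smat k A = (\<chi> i j. k * A$i$j)"

definition mconj :: "complex^2^2 \<Rightarrow> complex^2^2" where
  "mconj A = (\<chi> i j. cnj (A$i$j))"

definition vconj :: "complex^2 \<Rightarrow> complex^2" where
  "vconj v = (\<chi> i. cnj (v$i))"

definition outer :: "complex^2 \<Rightarrow> complex^2 \<Rightarrow> complex^2^2" where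
  "outer u v = (\<chi> i j. u$i * v$j)"

definition sigma2 :: "complex^2^2" where
  "sigma2 = mat2 0 (-\<i>) \<i> 0"

text \<open>rho on the real line: branch of sqrt(l^2+1) with rho ~ l, real for real l /= 0\<close>
definition rho :: "real \<Rightarrow> real" where
  "rho l = sgn l * sqrt (l\<^sup>2 + 1)"

text \<open>n on the real line: n^2 = (l+rho)/(2 rho) > 0, n -> 1; hence the positive root\<close>
definition nfun :: "real \<Rightarrow> real" where
  "nfun l = sqrt ((l + rho l) / (2 * rho l))"

definition Emat :: "real \<Rightarrow> complex^2^2" where
  "Emat l = smat (of_real (nfun l))
     (mat2 1 (\<i> * of_real (l - rho l)) (\<i> * of_real (l - rho l)) 1)"

definition sv :: "complex \<Rightarrow> complex^2" where
  "sv c = vec2 c (-c)"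

definition Nc :: "complex \<Rightarrow> real" where
  "Nc c = 2 * (cmod c)\<^sup>2"

definition wfun :: "complex \<Rightarrow> real \<Rightarrow> real \<Rightarrow> complex" where
  "wfun c x t = -2 * c\<^sup>2 * (of_real x + \<i> * of_real t)"

definition Ymat :: "complex \<Rightarrow> real \<Rightarrow> real \<Rightarrow> complex^2^2" where
  "Ymat c x t = smat (1 / of_real (4 * (cmod (1 - wfun c x t))\<^sup>2 + (Nc c)\<^sup>2))
     (smat (4 * (1 - cnj (wfun c x t))) (outer (sv c) (sv c) ** sigma2)
      + smat (2 * \<i> * of_real (Nc c)) (sigma2 ** outer (vconj (sv c)) (sv c) ** sigma2))"

definition Gmat :: "complex \<Rightarrow> real \<Rightarrow> real \<Rightarrow> real \<Rightarrow> complex^2^2" where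
  "Gmat c l x t = mat 1 + smat (1 / (of_real l - \<i>)) (Ymat c x t)
     + smat (1 / (of_real l + \<i>)) (sigma2 ** mconj (Ymat c x t) ** sigma2)"

definition U0 :: "complex \<Rightarrow> real \<Rightarrow> real \<Rightarrow> real \<Rightarrow> complex^2^2" where
  "U0 c l x t = Gmat c l x t ** Emat l **
     mat2 (exp (- \<i> * of_real (rho l * (x + l * t)))) 0 0 (exp (\<i> * of_real (rho l * (x + l * t))))"

definition u2 :: "complex \<Rightarrow> real \<Rightarrow> real \<Rightarrow> real \<Rightarrow> complex^2" where
  "u2 c l x t = (\<chi> i. U0 c l x t $ i $ 2)"

definition mu22 :: "complex \<Rightarrow> real \<Rightarrow> real \<Rightarrow> real \<Rightarrow> complex" where
  "mu22 c l x t = (u2 c l x t $ 1)\<^sup>2 - (cnj (u2 c l x t $ 2))\<^sup>2"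

definition nu22 :: "complex \<Rightarrow> real \<Rightarrow> real \<Rightarrow> real \<Rightarrow> complex" where
  "nu22 c l x t = \<i> * (u2 c l x t $ 1)\<^sup>2 + \<i> * (cnj (u2 c l x t $ 2))\<^sup>2"

definition Cmu :: "complex \<Rightarrow> (real \<Rightarrow> complex) \<Rightarrow> real \<Rightarrow> real" where
  "Cmu c psi1 l = (1 / pi) * Im (LINT y|lborel. psi1 y * cnj (nu22 c l y 0))"

definition Cnu :: "complex \<Rightarrow> (real \<Rightarrow> complex) \<Rightarrow> real \<Rightarrow> real" where
  "Cnu c psi1 l = - (1 / pi) * Im (LINT y|lborel. psi1 y * cnj (mu22 c l y 0))"

definition psi1R_integrand :: "complex \<Rightarrow> (real \<Rightarrow> complex) \<Rightarrow> real \<Rightarrow> real \<Rightarrow> real \<Rightarrow> complex" where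
  "psi1R_integrand c psi1 x t l =
     of_real (Cmu c psi1 l) * mu22 c l x t + of_real (Cnu c psi1 l) * nu22 c l x t"

definition psi1R :: "complex \<Rightarrow> (real \<Rightarrow> complex) \<Rightarrow> real \<Rightarrow> real \<Rightarrow> complex" where
  "psi1R c psi1 x t = (LINT l|lborel. psi1R_integrand c psi1 x t l)"

end

theory Submission
  imports Defs
begin

text \<open>The integrand is dominated by \<open>K (\<bar>Cmu\<bar> + \<bar>Cnu\<bar>)\<close>, which is integrable, because
\<open>mu22\<close> and \<open>nu22\<close> are bounded uniformly in \<open>(\<lambda>, x, t)\<close>. This holds because every factor
of \<open>U0 = G E exp(-i \<rho> (x + \<lambda> t) \<sigma>\<^sub>3)\<close> is bounded for real \<open>\<lambda>\<close>: the exponential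
is unitary; \<open>E\<close> has entries of modulus at most 1 since \<open>0 \<le> n \<le> 1\<close> and
\<open>\<bar>\<lambda> - \<rho>\<bar> \<le> 1\<close>; in \<open>G\<close> the factors \<open>1/(\<lambda> \<mp> i)\<close> have modulus at most 1, and \<open>Y\<close> is
bounded in \<open>(x, t)\<close> because its denominator \<open>4\<bar>1 - w\<bar>\<^sup>2 + N\<^sup>2\<close> dominates both
\<open>4 N \<bar>1 - w\<bar>\<close> and \<open>N\<^sup>2\<close>. Measurability in \<open>\<lambda>\<close> comes from continuity away from the
branch point \<open>\<lambda> = 0\<close>.\<close>

definition entrywise_norm :: "'a::real_normed_vector^'n^'m \<Rightarrow> real" where
  "entrywise_norm A = (\<Sum>i\<in>UNIV. \<Sum>j\<in>UNIV. norm (A$i$j))"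

lemma entrywise_norm_nonneg: "0 \<le> entrywise_norm A"
  unfolding entrywise_norm_def by (intro sum_nonneg) auto

lemma norm_entry_le_entrywise_norm: "norm (A$i$j) \<le> entrywise_norm A"
proof -
  have "norm (A$i$j) \<le> (\<Sum>j\<in>UNIV. norm (A$i$j))"
    by (rule member_le_sum) auto
  also have "\<dots> \<le> entrywise_norm A"
    unfolding entrywise_norm_def by (rule member_le_sum[of i]) (auto intro: sum_nonneg)
  finally show ?thesis .
qed

lemma entrywise_norm_add: "entrywise_norm (A + B) \<le> entrywise_norm A + entrywise_norm B"
  unfolding entrywise_norm_def sum.distrib[symmetric]
  by (intro sum_mono) (simp add: norm_triangle_ineq)

lemma entrywise_norm_mat_1:
  "entrywise_norm (mat 1 :: 'a::real_normed_algebra_1^'n^'n) = CARD('n)"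
  unfolding entrywise_norm_def mat_def by (simp add: if_distrib cong: if_cong)

lemma entrywise_norm_matrix_mult:
  fixes A :: "'a::real_normed_algebra_1^'n^'m" and B :: "'a^'k^'n"
  shows "entrywise_norm (A ** B) \<le> entrywise_norm A * entrywise_norm B"
proof -
  have "norm ((A ** B)$i$j) \<le> (\<Sum>k\<in>UNIV. norm (A$i$k) * norm (B$k$j))" for i j
    unfolding matrix_matrix_mult_def vec_lambda_beta
    by (rule order_trans[OF norm_sum sum_mono]) (rule norm_mult_ineq)
  then have "entrywise_norm (A ** B) \<le> (\<Sum>i\<in>UNIV. \<Sum>j\<in>UNIV. \<Sum>k\<in>UNIV. norm (A$i$k) * norm (B$k$j))"
    unfolding entrywise_norm_def by (intro sum_mono)
  also have "\<dots> = (\<Sum>i\<in>UNIV. \<Sum>k\<in>UNIV. \<Sum>j\<in>UNIV. norm (A$i$k) * norm (B$k$j))"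
    by (intro sum.cong refl sum.swap)
  also have "\<dots> = (\<Sum>i\<in>UNIV. \<Sum>k\<in>UNIV. norm (A$i$k) * (\<Sum>j\<in>UNIV. norm (B$k$j)))"
    by (simp add: sum_distrib_left)
  also have "\<dots> \<le> (\<Sum>i\<in>UNIV. \<Sum>k\<in>UNIV. norm (A$i$k) * entrywise_norm B)"
    unfolding entrywise_norm_def
    by (intro sum_mono mult_left_mono member_le_sum) (auto intro: sum_nonneg)
  also have "\<dots> = entrywise_norm A * entrywise_norm B"
    by (simp add: entrywise_norm_def sum_distrib_right)
  finally show ?thesis .
qed

lemma entrywise_norm_smat: "entrywise_norm (smat k A) = cmod k * entrywise_norm A"
  unfolding entrywise_norm_def smat_def by (simp add: norm_mult sum_distrib_left)

lemma entrywise_norm_mconj: "entrywise_norm (mconj A) = entrywise_norm A"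
  unfolding entrywise_norm_def mconj_def by simp

lemma entrywise_norm_mat2: "entrywise_norm (mat2 a b c d) = cmod a + cmod b + cmod c + cmod d"
  unfolding entrywise_norm_def mat2_def by (simp add: UNIV_2)

lemma entrywise_norm_sigma2: "entrywise_norm sigma2 = 2"
  by (simp add: sigma2_def entrywise_norm_mat2)

lemma entrywise_norm_phase: "entrywise_norm (mat2 (exp (- \<i> * of_real r)) 0 0 (exp (\<i> * of_real r))) = 2"
proof -
  have "- \<i> * complex_of_real r = \<i> * complex_of_real (- r)" by simp
  then show ?thesis unfolding entrywise_norm_mat2 by (simp only: norm_exp_i_times) simp
qed

lemma sqrt_one_plus_square_bounds: "\<bar>l\<bar> \<le> sqrt (l\<^sup>2 + 1)" "sqrt (l\<^sup>2 + 1) \<le> \<bar>l\<bar> + 1"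
  by (simp add: real_le_rsqrt) (simp add: real_sqrt_le_iff' power2_eq_square algebra_simps)

lemma abs_diff_rho_le_1: "\<bar>l - rho l\<bar> \<le> 1"
  using sqrt_one_plus_square_bounds[of l] by (cases l "0::real" rule: linorder_cases) (auto simp: rho_def)

lemma nfun_square_bounds: "0 \<le> (l + rho l) / (2 * rho l) \<and> (l + rho l) / (2 * rho l) \<le> 1"
proof (cases "l = 0")
  case False
  have s: "0 < sqrt (l\<^sup>2 + 1)" by (simp add: add_nonneg_pos)
  have "(l + rho l) / (2 * rho l) = 1/2 + \<bar>l\<bar> / sqrt (l\<^sup>2 + 1) / 2"
    using False s by (simp add: rho_def sgn_if field_simps)
  moreover have "\<bar>l\<bar> / sqrt (l\<^sup>2 + 1) \<le> 1"
    using s sqrt_one_plus_square_bounds(1)[of l] by simp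
  ultimately show ?thesis by simp
qed (simp add: rho_def)

lemma nfun_nonneg: "0 \<le> nfun l" and nfun_le_1: "nfun l \<le> 1"
  using nfun_square_bounds[of l] by (simp_all add: nfun_def)

lemma entrywise_norm_Emat_le: "entrywise_norm (Emat l) \<le> 4"
proof -
  have "entrywise_norm (Emat l) = nfun l * (2 + 2 * \<bar>l - rho l\<bar>)"
    unfolding Emat_def entrywise_norm_smat entrywise_norm_mat2 using nfun_nonneg[of l]
    by (simp add: norm_mult flip: of_real_diff)
  also have "\<dots> \<le> 1 * 4"
    using nfun_nonneg nfun_le_1 abs_diff_rho_le_1 by (intro mult_mono) auto
  finally show ?thesis by simp
qed

lemma Ymat_bounded:
  assumes "c \<noteq> 0"
  shows "\<exists>K. \<forall>x t. entrywise_norm (Ymat c x t) \<le> K"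
proof (intro exI allI)
  fix x t
  define a where "a = cmod (1 - wfun c x t)"
  define N where "N = Nc c"
  define D where "D = 4 * a\<^sup>2 + N\<^sup>2"
  define P where "P = outer (sv c) (sv c) ** sigma2"
  define Q where "Q = sigma2 ** outer (vconj (sv c)) (sv c) ** sigma2"
  have N: "0 < N" using assms by (simp add: N_def Nc_def)
  have D: "0 < D" using N by (simp add: D_def add_nonneg_pos)
  have "cmod (4 * (1 - cnj (wfun c x t))) = 4 * a"
    by (metis a_def complex_cnj_one complex_cnj_diff complex_mod_cnj norm_mult norm_numeral)
  moreover have "cmod (2 * \<i> * of_real N) = 2 * N" using N by (simp add: norm_mult)
  ultimately have "entrywise_norm (smat (4 * (1 - cnj (wfun c x t))) P + smat (2 * \<i> * of_real N) Q)
      \<le> 4 * a * entrywise_norm P + 2 * N * entrywise_norm Q"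
    using entrywise_norm_add by (metis entrywise_norm_smat)
  then have "entrywise_norm (Ymat c x t) \<le> (4 * a * entrywise_norm P + 2 * N * entrywise_norm Q) / D"
    using D unfolding Ymat_def entrywise_norm_smat P_def[symmetric] Q_def[symmetric]
      N_def[symmetric] a_def[symmetric] D_def[symmetric]
    by (simp add: norm_divide divide_right_mono)
  also have "\<dots> = (4 * a / D) * entrywise_norm P + 2 * (N / D) * entrywise_norm Q"
    by (simp add: add_divide_distrib)
  also have "\<dots> \<le> (1 / N) * entrywise_norm P + 2 * (1 / N) * entrywise_norm Q"
  proof (intro add_mono mult_right_mono mult_left_mono entrywise_norm_nonneg)
    have "4 * a * N \<le> D"
      using zero_le_power2[of "2 * a - N"] unfolding D_def by (simp add: power2_eq_square algebra_simps)
    then show "4 * a / D \<le> 1 / N" using D N by (simp add: field_simps)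
    show "N / D \<le> 1 / N" using D N by (simp add: D_def field_simps power2_eq_square)
  qed simp
  finally show "entrywise_norm (Ymat c x t) \<le> (entrywise_norm P + 2 * entrywise_norm Q) / Nc c"
    by (simp add: N_def add_divide_distrib)
qed

lemma norm_inverse_real_plus_minus_i_le_1:
  "cmod (1 / (of_real l - \<i>)) \<le> 1" "cmod (1 / (of_real l + \<i>)) \<le> 1"
  using abs_Im_le_cmod[of "of_real l - \<i>"] abs_Im_le_cmod[of "of_real l + \<i>"]
  by (simp_all add: norm_divide divide_le_eq_1)

lemma Gmat_bounded:
  assumes "c \<noteq> 0"
  shows "\<exists>K. \<forall>l x t. entrywise_norm (Gmat c l x t) \<le> K"
proof -
  obtain K where K: "\<And>x t. entrywise_norm (Ymat c x t) \<le> K"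
    using Ymat_bounded[OF assms] by blast
  have "entrywise_norm (Gmat c l x t) \<le> 2 + 5 * K" for l x t
  proof -
    have "entrywise_norm (sigma2 ** mconj (Ymat c x t) ** sigma2)
        \<le> entrywise_norm sigma2 * entrywise_norm (mconj (Ymat c x t)) * entrywise_norm sigma2"
      by (intro order_trans[OF entrywise_norm_matrix_mult] mult_right_mono
          entrywise_norm_matrix_mult entrywise_norm_nonneg)
    then have conj: "entrywise_norm (sigma2 ** mconj (Ymat c x t) ** sigma2) \<le> 4 * K"
      using K[of x t] by (simp add: entrywise_norm_sigma2 entrywise_norm_mconj)
    have "entrywise_norm (Gmat c l x t) \<le> entrywise_norm (mat 1 :: complex^2^2)
        + cmod (1 / (of_real l - \<i>)) * entrywise_norm (Ymat c x t)
        + cmod (1 / (of_real l + \<i>)) * entrywise_norm (sigma2 ** mconj (Ymat c x t) ** sigma2)"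
      unfolding Gmat_def
      by (intro order_trans[OF entrywise_norm_add] add_mono order_refl) (simp_all add: entrywise_norm_smat)
    also have "\<dots> \<le> 2 + 1 * K + 1 * (4 * K)"
      using entrywise_norm_nonneg
      by (intro add_mono mult_mono norm_inverse_real_plus_minus_i_le_1 K conj)
        (auto simp: entrywise_norm_mat_1)
    finally show ?thesis by simp
  qed
  then show ?thesis by blast
qed

lemma U0_bounded:
  assumes "c \<noteq> 0"
  shows "\<exists>K. \<forall>l x t. entrywise_norm (U0 c l x t) \<le> K"
proof -
  obtain K where K: "\<And>l x t. entrywise_norm (Gmat c l x t) \<le> K"
    using Gmat_bounded[OF assms] by blast
  have "entrywise_norm (U0 c l x t) \<le> K * 4 * 2" for l x t
  proof -
    have "entrywise_norm (U0 c l x t)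
        \<le> entrywise_norm (Gmat c l x t ** Emat l) * entrywise_norm (mat2 (exp (- \<i> * of_real (rho l * (x + l * t)))) 0 0 (exp (\<i> * of_real (rho l * (x + l * t)))))"
      unfolding U0_def by (rule entrywise_norm_matrix_mult)
    also have "\<dots> \<le> entrywise_norm (Gmat c l x t) * entrywise_norm (Emat l) * 2"
      unfolding entrywise_norm_phase by (intro mult_right_mono entrywise_norm_matrix_mult) simp
    also have "\<dots> \<le> K * 4 * 2"
      using K[of l x t] entrywise_norm_Emat_le[of l] entrywise_norm_nonneg
      by (intro mult_right_mono mult_mono) (auto intro: order_trans)
    finally show ?thesis .
  qed
  then show ?thesis by blast
qed

lemma mu22_nu22_bounded:
  assumes "c \<noteq> 0"
  shows "\<exists>K. \<forall>l x t. cmod (mu22 c l x t) \<le> K \<and> cmod (nu22 c l x t) \<le> K"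
proof -
  obtain K where K: "\<And>l x t. entrywise_norm (U0 c l x t) \<le> K"
    using U0_bounded[OF assms] by blast
  have u: "cmod ((u2 c l x t $ i)\<^sup>2) \<le> K\<^sup>2" for l x t i
    unfolding u2_def vec_lambda_beta norm_power
    by (intro power_mono order_trans[OF norm_entry_le_entrywise_norm K]) simp
  have "cmod (mu22 c l x t) \<le> 2 * K\<^sup>2 \<and> cmod (nu22 c l x t) \<le> 2 * K\<^sup>2" for l x t
    using norm_triangle_ineq4[of "(u2 c l x t $ 1)\<^sup>2" "(cnj (u2 c l x t $ 2))\<^sup>2"]
      norm_triangle_ineq[of "\<i> * (u2 c l x t $ 1)\<^sup>2" "\<i> * (cnj (u2 c l x t $ 2))\<^sup>2"]
      u[of l x t 1] u[of l x t 2]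
    unfolding mu22_def nu22_def by (simp add: norm_mult norm_power)
  then show ?thesis by blast
qed

lemma continuous_on_matrix_mult[continuous_intros]:
  fixes f :: "'a::topological_space \<Rightarrow> 'b::real_normed_algebra_1^'n^'m" and g :: "'a \<Rightarrow> 'b^'k^'n"
  shows "continuous_on S f \<Longrightarrow> continuous_on S g \<Longrightarrow> continuous_on S (\<lambda>x. f x ** g x)"
  unfolding matrix_matrix_mult_def by (intro continuous_intros) auto

lemma continuous_on_smat[continuous_intros]:
  "continuous_on S f \<Longrightarrow> continuous_on S g \<Longrightarrow> continuous_on S (\<lambda>x. smat (f x) (g x))"
  unfolding smat_def by (intro continuous_intros) auto

lemma continuous_on_mat2[continuous_intros]:
  assumes "continuous_on S a" "continuous_on S b" "continuous_on S c" "continuous_on S d"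
  shows "continuous_on S (\<lambda>x. mat2 (a x) (b x) (c x) (d x))"
  unfolding mat2_def
proof (intro continuous_on_vec_lambda)
  fix i j :: 2
  show "continuous_on S (\<lambda>x. if i = 1 then if j = 1 then a x else b x else if j = 1 then c x else d x)"
    using assms by (cases "i = 1"; cases "j = 1") simp_all
qed

lemma rho_nonzero: "l \<noteq> 0 \<Longrightarrow> rho l \<noteq> 0"
  using add_nonneg_pos[OF zero_le_power2[of l] zero_less_one] by (simp add: rho_def sgn_if)

lemma continuous_on_rho: "continuous_on (-{0}) rho"
  unfolding rho_def
  by (intro continuous_intros continuous_at_imp_continuous_on ballI isCont_sgn) auto

lemma continuous_on_nfun: "continuous_on (-{0}) nfun"
  unfolding nfun_def by (intro continuous_intros continuous_on_rho) (auto simp: rho_nonzero)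

lemma continuous_on_U0: "continuous_on (-{0}) (\<lambda>l. U0 c l x t)"
proof -
  have G: "continuous_on (-{0}) (\<lambda>l. Gmat c l x t)"
    unfolding Gmat_def by (intro continuous_intros) (auto simp: complex_eq_iff)
  have E: "continuous_on (-{0}) Emat"
    unfolding Emat_def by (intro continuous_intros continuous_on_nfun continuous_on_rho)
  have phase: "continuous_on (-{0}) (\<lambda>l. of_real (rho l * (x + l * t)) :: complex)"
    by (intro continuous_intros continuous_on_rho)
  show ?thesis
    unfolding U0_def by (intro continuous_intros G E phase)
qed

lemma borel_measurable_mu22: "(\<lambda>l. mu22 c l x t) \<in> borel_measurable borel"
  and borel_measurable_nu22: "(\<lambda>l. nu22 c l x t) \<in> borel_measurable borel"
proof -
  have u2: "continuous_on (-{0}) (\<lambda>l. u2 c l x t)"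
    unfolding u2_def by (intro continuous_on_vec_lambda continuous_intros continuous_on_U0)
  have "continuous_on (-{0}) (\<lambda>l. mu22 c l x t)" "continuous_on (-{0}) (\<lambda>l. nu22 c l x t)"
    unfolding mu22_def nu22_def by (intro continuous_intros u2)+
  then show "(\<lambda>l. mu22 c l x t) \<in> borel_measurable borel" "(\<lambda>l. nu22 c l x t) \<in> borel_measurable borel"
    by (auto intro: borel_measurable_continuous_countable_exceptions[of "{0}"])
qed

lemma integrable_real_weighted_bounded:
  fixes C :: "real \<Rightarrow> real" and k :: "real \<Rightarrow> complex"
  assumes C: "integrable lborel C" and k: "k \<in> borel_measurable borel" and bound: "\<And>l. cmod (k l) \<le> K"
  shows "integrable lborel (\<lambda>l. of_real (C l) * k l)"
    and "cmod (LINT l|lborel. of_real (C l) * k l) \<le> K * (LINT l|lborel. \<bar>C l\<bar>)"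
proof -
  have dom: "cmod (of_real (C l) * k l) \<le> K * \<bar>C l\<bar>" for l
    using mult_left_mono[OF bound[of l] abs_ge_zero[of "C l"]] by (simp add: norm_mult mult.commute)
  have CK: "integrable lborel (\<lambda>l. K * \<bar>C l\<bar>)"
    using C by (intro integrable_mult_right integrable_abs)
  show int: "integrable lborel (\<lambda>l. of_real (C l) * k l)"
  proof (rule Bochner_Integration.integrable_bound[OF CK])
    show "(\<lambda>l. of_real (C l) * k l) \<in> borel_measurable lborel"
      using borel_measurable_integrable[OF C] k by simp
    show "AE l in lborel. norm (of_real (C l) * k l) \<le> norm (K * \<bar>C l\<bar>)"
      using dom by (intro AE_I2) (metis abs_ge_self order_trans real_norm_def)
  qed
  show "cmod (LINT l|lborel. of_real (C l) * k l) \<le> K * (LINT l|lborel. \<bar>C l\<bar>)"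
    using Bochner_Integration.integral_norm_bound_integral[OF int CK dom] by simp
qed

theorem mainTheorem14:
  fixes c :: complex and psi1 :: "real \<Rightarrow> complex"
  assumes "c \<noteq> 0"
    and "AE l in lborel. integrable lborel (\<lambda>y. psi1 y * cnj (nu22 c l y 0))"
    and "AE l in lborel. integrable lborel (\<lambda>y. psi1 y * cnj (mu22 c l y 0))"
    and "integrable lborel (Cmu c psi1)"
    and "integrable lborel (Cnu c psi1)"
  shows "\<exists>B. \<forall>x t. integrable lborel (psi1R_integrand c psi1 x t)
                 \<and> cmod (psi1R c psi1 x t) \<le> B"
proof -
  obtain K where K: "\<And>l x t. cmod (mu22 c l x t) \<le> K" "\<And>l x t. cmod (nu22 c l x t) \<le> K"
    using mu22_nu22_bounded[OF assms(1)] by blast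
  note mu = integrable_real_weighted_bounded[OF assms(4) borel_measurable_mu22 K(1)]
  note nu = integrable_real_weighted_bounded[OF assms(5) borel_measurable_nu22 K(2)]
  have "integrable lborel (psi1R_integrand c psi1 x t)
      \<and> cmod (psi1R c psi1 x t) \<le> K * (LINT l|lborel. \<bar>Cmu c psi1 l\<bar>) + K * (LINT l|lborel. \<bar>Cnu c psi1 l\<bar>)"
    for x t
    using mu(1)[of x t] nu(1)[of x t] mu(2)[of x t] nu(2)[of x t]
      norm_triangle_ineq[of "LINT l|lborel. of_real (Cmu c psi1 l) * mu22 c l x t"
        "LINT l|lborel. of_real (Cnu c psi1 l) * nu22 c l x t"]
    unfolding psi1R_def psi1R_integrand_def by simp
  then show ?thesis by blast
qed

end
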